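(* Let $L$ be a weak Noetherian C-lattice. Then $L$ is sharp if and only if every element of $L$ is principal.
   Context: A multiplicative lattice is a complete lattice $(L,\le)$ with bottom $0$ and top $1$ which is also a commutative monoid with identity $1$ such that $a(\bigvee_\alpha b_\alpha)=\bigvee_\alpha(ab_\alpha)$ for all $a,b_\alpha\in L$. For $x,y\in L$, $(y:x)=\bigvee\{a\in L: ax\le y\}$. An element $c$ is compact if $c\le\bigvee S$ implies $c\le\bigvee T$ for some finite $T\subseteq S$. A C-lattice is a multiplicative lattice in which $1$ is compact, the product of two compact elements is compact, and every element is a join of compact elements. An element $x$ is meet principal if $y\wedge zx=((y:x)\wedge z)x$ for all $y,z\in L$; join principal if $y\vee(z:x)=((yx\vee z):x)$ for all $y,z\in L$; principal if both. $L$ is weak Noetherian if every element is a join of principal elements and every element of $L$ is compact. $L$ is sharp if whenever $a_1a_2\le b$ with $a_1,a_2,b\in L$, there exist $b_1,b_2\in L$ with $a_i\le b_i$ ($i=1,2$) and $b=b_1b_2$. *)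

theory Defs
  imports Main
begin

definition mult_lattice :: "('a::complete_lattice \<Rightarrow> 'a \<Rightarrow> 'a) \<Rightarrow> bool" where
  "mult_lattice m \<longleftrightarrow>
     (\<forall>a b. m a b = m b a) \<and>
     (\<forall>a b c. m (m a b) c = m a (m b c)) \<and>
     (\<forall>a. m a top = a) \<and>
     (\<forall>a B. m a (Sup B) = Sup ((\<lambda>b. m a b) ` B))"

definition colon :: "('a::complete_lattice \<Rightarrow> 'a \<Rightarrow> 'a) \<Rightarrow> 'a \<Rightarrow> 'a \<Rightarrow> 'a" where
  "colon m y x = Sup {a. m a x \<le> y}"

definition compact_el :: "'a::complete_lattice \<Rightarrow> bool" where
  "compact_el c \<longleftrightarrow> (\<forall>S. c \<le> Sup S \<longrightarrow> (\<exists>T. T \<subseteq> S \<and> finite T \<and> c \<le> Sup T))"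

definition C_lattice :: "('a::complete_lattice \<Rightarrow> 'a \<Rightarrow> 'a) \<Rightarrow> bool" where
  "C_lattice m \<longleftrightarrow> mult_lattice m \<and> compact_el (top::'a) \<and>
     (\<forall>a b. compact_el a \<and> compact_el b \<longrightarrow> compact_el (m a b)) \<and>
     (\<forall>x::'a. \<exists>S. (\<forall>c\<in>S. compact_el c) \<and> x = Sup S)"

definition meet_principal :: "('a::complete_lattice \<Rightarrow> 'a \<Rightarrow> 'a) \<Rightarrow> 'a \<Rightarrow> bool" where
  "meet_principal m x \<longleftrightarrow> (\<forall>y z. inf y (m z x) = m (inf (colon m y x) z) x)"

definition join_principal :: "('a::complete_lattice \<Rightarrow> 'a \<Rightarrow> 'a) \<Rightarrow> 'a \<Rightarrow> bool" where
  "join_principal m x \<longleftrightarrow> (\<forall>y z. sup y (colon m z x) = colon m (sup (m y x) z) x)"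

definition principal :: "('a::complete_lattice \<Rightarrow> 'a \<Rightarrow> 'a) \<Rightarrow> 'a \<Rightarrow> bool" where
  "principal m x \<longleftrightarrow> meet_principal m x \<and> join_principal m x"

definition weak_noetherian :: "('a::complete_lattice \<Rightarrow> 'a \<Rightarrow> 'a) \<Rightarrow> bool" where
  "weak_noetherian m \<longleftrightarrow>
     (\<forall>x::'a. \<exists>S. (\<forall>p\<in>S. principal m p) \<and> x = Sup S) \<and>
     (\<forall>x::'a. compact_el x)"

definition sharp :: "('a::complete_lattice \<Rightarrow> 'a \<Rightarrow> 'a) \<Rightarrow> bool" where
  "sharp m \<longleftrightarrow> (\<forall>a1 a2 b. m a1 a2 \<le> b \<longrightarrow>
      (\<exists>b1 b2. a1 \<le> b1 \<and> a2 \<le> b2 \<and> b = m b1 b2))"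

end

theory Submission
  imports Defs
begin

(* If every element is principal, sharpness is witnessed by b2 = b \<or> a2 and b1 = (b : b2),
   because meet principality of b2 gives b = b \<and> b2 = (b : b2) b2.

   Conversely, principality is a local property: write u \<le>\<^sub>M v when s u \<le> v for some s \<not>\<le> M;
   then x is principal as soon as, at every maximal M, it is locally equal to a principal
   element below it.  Sharpness forces each maximal M to be locally generated by a principal
   r \<le> M; Nakayama's lemma and the ascending chain condition then make every element locally
   0 or a power of r.  So the local order is total, and a finite join of principal elements
   is locally equal to one of them. *)

lemma compact_Sup_chain_attained:
  fixes f :: "nat \<Rightarrow> 'a::complete_lattice"
  assumes "compact_el (Sup (range f))" and "mono f"
  shows "\<exists>N. Sup (range f) = f N"
proof -
  obtain T where T: "T \<subseteq> range f" "finite T" "Sup (range f) \<le> Sup T"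
    using assms(1) unfolding compact_el_def by blast
  obtain I where I: "finite I" "T = f ` I"
    using finite_subset_image[OF T(2,1)] by blast
  define N where "N = Max (insert 0 I)"
  have "Sup T \<le> f N"
    using I by (auto intro!: Sup_least monoD[OF assms(2)] simp: N_def)
  with T(3) have "Sup (range f) \<le> f N" by (rule order_trans)
  then show ?thesis by (blast intro: antisym Sup_upper)
qed

definition maximal_el :: "'a::order_top \<Rightarrow> bool" where
  "maximal_el M \<longleftrightarrow> M \<noteq> top \<and> (\<forall>y. M \<le> y \<longrightarrow> y = M \<or> y = top)"

locale multiplicative_lattice =
  fixes m :: "'a::complete_lattice \<Rightarrow> 'a \<Rightarrow> 'a" (infixl "\<cdot>" 70)
  assumes mult_lattice: "mult_lattice m"
begin

lemma mult_commute: "a \<cdot> b = b \<cdot> a"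
  using mult_lattice unfolding mult_lattice_def by blast

lemma mult_assoc: "a \<cdot> b \<cdot> c = a \<cdot> (b \<cdot> c)"
  using mult_lattice unfolding mult_lattice_def by blast

lemma mult_left_commute: "a \<cdot> (b \<cdot> c) = b \<cdot> (a \<cdot> c)"
  by (metis mult_assoc mult_commute)

lemma mult_top_right [simp]: "a \<cdot> top = a"
  using mult_lattice unfolding mult_lattice_def by blast

lemma mult_top_left [simp]: "top \<cdot> a = a"
  by (metis mult_commute mult_top_right)

lemma mult_Sup_right: "a \<cdot> Sup B = Sup ((\<cdot>) a ` B)"
  using mult_lattice unfolding mult_lattice_def by blast

lemma mult_sup_right: "a \<cdot> sup b c = sup (a \<cdot> b) (a \<cdot> c)"
  using mult_Sup_right[of a "{b, c}"] by simp

lemma mult_bot_right [simp]: "a \<cdot> bot = bot"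
  using mult_Sup_right[of a "{}"] by simp

lemma mult_mono_right: "b \<le> c \<Longrightarrow> a \<cdot> b \<le> a \<cdot> c"
  by (metis mult_sup_right sup.absorb_iff2)

lemma mult_mono_left: "b \<le> c \<Longrightarrow> b \<cdot> a \<le> c \<cdot> a"
  by (metis mult_commute mult_mono_right)

lemma mult_mono: "a \<le> b \<Longrightarrow> c \<le> d \<Longrightarrow> a \<cdot> c \<le> b \<cdot> d"
  by (meson mult_mono_left mult_mono_right order_trans)

lemma mult_le_left: "a \<cdot> b \<le> a"
  using mult_mono_right[of b top a] by simp

lemma mult_le_right: "a \<cdot> b \<le> b"
  by (metis mult_commute mult_le_left)

lemma colon_mult_le: "colon m y x \<cdot> x \<le> y"
proof -
  have "colon m y x \<cdot> x = Sup ((\<cdot>) x ` {a. a \<cdot> x \<le> y})"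
    by (simp add: colon_def mult_commute mult_Sup_right)
  also have "\<dots> \<le> y"
    by (auto intro!: Sup_least simp: mult_commute)
  finally show ?thesis .
qed

lemma le_colon_iff: "a \<le> colon m y x \<longleftrightarrow> a \<cdot> x \<le> y"
  by (metis colon_mult_le mult_mono_left order_trans colon_def Sup_upper mem_Collect_eq)

lemma colon_mono: "y \<le> y' \<Longrightarrow> x' \<le> x \<Longrightarrow> colon m y x \<le> colon m y' x'"
  by (meson colon_mult_le le_colon_iff mult_mono_right order_trans)

lemma principal_inf_eq: "principal m r \<Longrightarrow> inf y r = colon m y r \<cdot> r"
  unfolding principal_def meet_principal_def by (metis inf_top.right_neutral mult_top_left)

lemma principal_colon_sup_eq:
  "principal m r \<Longrightarrow> colon m (sup (y \<cdot> r) z) r = sup y (colon m z r)"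
  unfolding principal_def join_principal_def by metis

lemma principal_bot: "principal m bot"
proof -
  have "colon m y bot = top" for y
    by (simp add: le_colon_iff top_unique[symmetric])
  then show ?thesis
    unfolding principal_def meet_principal_def join_principal_def by simp
qed

lemma all_principal_imp_sharp:
  assumes "\<forall>x. principal m x"
  shows "sharp m"
  unfolding sharp_def
proof (intro allI impI)
  fix a1 a2 b
  assume "a1 \<cdot> a2 \<le> b"
  then have "a1 \<cdot> sup b a2 \<le> b"
    by (simp add: mult_sup_right mult_le_right)
  moreover have "b = colon m b (sup b a2) \<cdot> sup b a2"
    using principal_inf_eq[of "sup b a2" b] assms by (simp add: inf_absorb1)
  ultimately show "\<exists>b1 b2. a1 \<le> b1 \<and> a2 \<le> b2 \<and> b = b1 \<cdot> b2"
    by (metis le_colon_iff sup.cobounded2)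
qed

lemma maximal_el_prime:
  assumes "maximal_el M" and "a \<cdot> b \<le> M"
  shows "a \<le> M \<or> b \<le> M"
proof (rule ccontr)
  assume "\<not> (a \<le> M \<or> b \<le> M)"
  then have "sup a M = top" and b: "\<not> b \<le> M"
    using assms(1) unfolding maximal_el_def by (metis sup.cobounded1 sup.cobounded2)+
  then have "b = sup (b \<cdot> a) (b \<cdot> M)"
    by (metis mult_sup_right mult_top_right)
  also have "\<dots> \<le> M"
    using assms(2) by (metis mult_commute mult_le_right sup_least)
  finally show False using b by simp
qed

lemma sharp_above_square_maximal:
  assumes "sharp m" and M: "maximal_el M" and "M \<cdot> M \<le> b" and "b \<le> M"
  shows "b = M \<cdot> M \<or> b = M"
proof -
  obtain b1 b2 where "M \<le> b1" "M \<le> b2" "b = b1 \<cdot> b2"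
    using assms(1,3) unfolding sharp_def by blast
  moreover have "b \<noteq> top"
    using M assms(4) top_unique unfolding maximal_el_def by blast
  moreover have "b1 = M \<or> b1 = top" "b2 = M \<or> b2 = top"
    using M \<open>M \<le> b1\<close> \<open>M \<le> b2\<close> unfolding maximal_el_def by blast+
  ultimately show ?thesis
    by (metis mult_top_left mult_top_right)
qed

primrec mult_pow :: "'a \<Rightarrow> nat \<Rightarrow> 'a" where
  "mult_pow r 0 = top"
| "mult_pow r (Suc k) = r \<cdot> mult_pow r k"

lemma mult_pow_antimono: "j \<le> k \<Longrightarrow> mult_pow r k \<le> mult_pow r j"
  by (induction k) (auto simp: le_Suc_eq intro: order_trans[OF mult_le_right])

definition loc_le :: "'a \<Rightarrow> 'a \<Rightarrow> 'a \<Rightarrow> bool" where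
  "loc_le M u v \<longleftrightarrow> (\<exists>s. \<not> s \<le> M \<and> s \<cdot> u \<le> v)"

lemma loc_le_iff_colon: "loc_le M u v \<longleftrightarrow> \<not> colon m v u \<le> M"
  unfolding loc_le_def by (meson colon_mult_le le_colon_iff order_trans)

end

locale localization = multiplicative_lattice +
  fixes M :: 'a
  assumes maximal: "maximal_el M"
begin

abbreviation loc_le_at :: "'a \<Rightarrow> 'a \<Rightarrow> bool" (infix "\<preceq>" 50) where
  "u \<preceq> v \<equiv> loc_le M u v"

lemma loc_leI: "\<not> s \<le> M \<Longrightarrow> s \<cdot> u \<le> v \<Longrightarrow> u \<preceq> v"
  unfolding loc_le_def by blast

lemma loc_leE:
  assumes "u \<preceq> v"
  obtains s where "\<not> s \<le> M" and "s \<cdot> u \<le> v"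
  using assms unfolding loc_le_def by blast

lemma le_imp_loc_le: "u \<le> v \<Longrightarrow> u \<preceq> v"
proof (rule loc_leI)
  show "\<not> top \<le> M"
    using maximal top_unique unfolding maximal_el_def by blast
qed simp

lemma loc_le_refl: "u \<preceq> u"
  by (simp add: le_imp_loc_le)

lemma mult_not_le_maximal: "\<not> s \<le> M \<Longrightarrow> \<not> t \<le> M \<Longrightarrow> \<not> s \<cdot> t \<le> M"
  using maximal_el_prime[OF maximal] by blast

lemma loc_le_trans [trans]: "u \<preceq> v \<Longrightarrow> v \<preceq> w \<Longrightarrow> u \<preceq> w"
proof (elim loc_leE)
  fix s t
  assume "\<not> s \<le> M" "s \<cdot> u \<le> v" "\<not> t \<le> M" "t \<cdot> v \<le> w"
  then show "u \<preceq> w"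
    by (metis loc_leI mult_not_le_maximal mult_assoc mult_mono_right order_trans)
qed

lemma le_loc_le_trans [trans]: "u \<le> v \<Longrightarrow> v \<preceq> w \<Longrightarrow> u \<preceq> w"
  using le_imp_loc_le loc_le_trans by blast

lemma loc_le_le_trans [trans]: "u \<preceq> v \<Longrightarrow> v \<le> w \<Longrightarrow> u \<preceq> w"
  using le_imp_loc_le loc_le_trans by blast

lemma loc_le_supI: "u \<preceq> w \<Longrightarrow> v \<preceq> w \<Longrightarrow> sup u v \<preceq> w"
proof (elim loc_leE)
  fix s t
  assume "\<not> s \<le> M" "s \<cdot> u \<le> w" "\<not> t \<le> M" "t \<cdot> v \<le> w"
  then have "s \<cdot> t \<cdot> u \<le> w" "s \<cdot> t \<cdot> v \<le> w"
    by (metis mult_assoc mult_commute mult_le_right order_trans)+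
  then show "sup u v \<preceq> w"
    by (metis \<open>\<not> s \<le> M\<close> \<open>\<not> t \<le> M\<close> loc_leI mult_not_le_maximal mult_sup_right sup_least)
qed

lemma loc_le_infI: "u \<preceq> v \<Longrightarrow> u \<preceq> w \<Longrightarrow> u \<preceq> inf v w"
proof (elim loc_leE)
  fix s t
  assume "\<not> s \<le> M" "s \<cdot> u \<le> v" "\<not> t \<le> M" "t \<cdot> u \<le> w"
  then have "s \<cdot> t \<cdot> u \<le> v" "s \<cdot> t \<cdot> u \<le> w"
    by (metis mult_assoc mult_left_commute mult_le_right order_trans)+
  then show "u \<preceq> inf v w"
    using \<open>\<not> s \<le> M\<close> \<open>\<not> t \<le> M\<close> by (intro loc_leI[of "s \<cdot> t"]) (simp_all add: mult_not_le_maximal)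
qed

lemma loc_le_sup_mono: "u \<preceq> u' \<Longrightarrow> v \<preceq> v' \<Longrightarrow> sup u v \<preceq> sup u' v'"
  by (meson loc_le_le_trans loc_le_supI sup.cobounded1 sup.cobounded2)

lemma loc_le_inf_mono: "u \<preceq> u' \<Longrightarrow> v \<preceq> v' \<Longrightarrow> inf u v \<preceq> inf u' v'"
  by (meson le_loc_le_trans loc_le_infI inf.cobounded1 inf.cobounded2)

lemma loc_le_mult: "u \<preceq> v \<Longrightarrow> a \<cdot> u \<preceq> a \<cdot> v"
  by (elim loc_leE) (metis loc_leI mult_left_commute mult_mono_right)

lemma loc_le_mult_right: "u \<preceq> v \<Longrightarrow> u \<cdot> a \<preceq> v \<cdot> a"
  by (metis loc_le_mult mult_commute)

lemma loc_le_colon: "u \<preceq> v \<Longrightarrow> x \<preceq> p \<Longrightarrow> colon m u p \<preceq> colon m v x"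
proof (elim loc_leE)
  fix s t
  assume "\<not> s \<le> M" "s \<cdot> u \<le> v" "\<not> t \<le> M" "t \<cdot> x \<le> p"
  have "s \<cdot> t \<cdot> colon m u p \<cdot> x = s \<cdot> (colon m u p \<cdot> (t \<cdot> x))"
    by (metis mult_assoc mult_commute)
  also have "\<dots> \<le> s \<cdot> (colon m u p \<cdot> p)"
    using \<open>t \<cdot> x \<le> p\<close> by (simp add: mult_mono_right)
  also have "\<dots> \<le> v"
    using \<open>s \<cdot> u \<le> v\<close> colon_mult_le by (meson mult_mono_right order_trans)
  finally show ?thesis
    by (meson \<open>\<not> s \<le> M\<close> \<open>\<not> t \<le> M\<close> le_colon_iff loc_leI mult_not_le_maximal mult_assoc)
qed

lemma loc_meet_principal:
  assumes "principal m p" and "p \<le> x" and "x \<preceq> p"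
  shows "inf y (z \<cdot> x) \<preceq> inf (colon m y x) z \<cdot> x"
proof -
  have "inf y (z \<cdot> x) \<preceq> inf y (z \<cdot> p)"
    using assms(3) by (intro loc_le_inf_mono loc_le_refl loc_le_mult)
  also have "\<dots> = inf (colon m y p) z \<cdot> p"
    using assms(1) unfolding principal_def meet_principal_def by blast
  also have "\<dots> \<le> inf (colon m y p) z \<cdot> x"
    using assms(2) by (rule mult_mono_right)
  also have "\<dots> \<preceq> inf (colon m y x) z \<cdot> x"
    using assms(3) by (intro loc_le_mult_right loc_le_inf_mono loc_le_colon loc_le_refl)
  finally show ?thesis .
qed

lemma loc_join_principal:
  assumes "principal m p" and "p \<le> x" and "x \<preceq> p"
  shows "colon m (sup (y \<cdot> x) z) x \<preceq> sup y (colon m z x)"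
proof -
  have "colon m (sup (y \<cdot> x) z) x \<le> colon m (sup (y \<cdot> x) z) p"
    using assms(2) by (intro colon_mono order_refl)
  also have "\<dots> \<preceq> colon m (sup (y \<cdot> p) z) p"
    using assms(3) by (intro loc_le_colon loc_le_sup_mono loc_le_mult loc_le_refl)
  also have "\<dots> = sup y (colon m z p)"
    using assms(1) by (rule principal_colon_sup_eq)
  also have "\<dots> \<preceq> sup y (colon m z x)"
    using assms(3) by (intro loc_le_sup_mono loc_le_colon loc_le_refl)
  finally show ?thesis .
qed

lemma principal_loc_nakayama:
  assumes "principal m r" and "r \<preceq> sup (M \<cdot> r) w"
  shows "r \<preceq> w"
proof -
  obtain s where "\<not> s \<le> M" and "s \<le> colon m (sup (M \<cdot> r) w) r"
    using assms(2) by (auto elim: loc_leE simp: le_colon_iff)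
  then have "\<not> sup M (colon m w r) \<le> M"
    using principal_colon_sup_eq[OF assms(1)] by (metis order_trans)
  then show ?thesis
    by (simp add: loc_le_iff_colon)
qed

end

locale weak_noetherian_lattice = multiplicative_lattice +
  assumes weak_noetherian: "weak_noetherian m"
begin

lemma compact: "compact_el (x :: 'a)"
  using weak_noetherian unfolding weak_noetherian_def by blast

lemma finite_principal_decomposition:
  obtains F where "finite F" and "\<forall>p\<in>F. principal m p" and "x = Sup F"
proof -
  obtain S where S: "\<forall>p\<in>S. principal m p" "x = Sup S"
    using weak_noetherian unfolding weak_noetherian_def by blast
  moreover obtain T where T: "T \<subseteq> S" "finite T" "x \<le> Sup T"
    using compact[of x, unfolded compact_el_def] S(2) by blast
  moreover have "Sup T \<le> x"
    using T(1) S(2) by (simp add: Sup_subset_mono)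
  ultimately show ?thesis
    using that[of T] by (meson antisym subsetD)
qed

lemma ascending_chain_stabilizes:
  assumes "mono (f :: nat \<Rightarrow> 'a)"
  shows "\<exists>N. f (Suc N) \<le> f N"
proof -
  obtain N where "Sup (range f) = f N"
    using compact_Sup_chain_attained[OF compact assms] by blast
  moreover have "f (Suc N) \<le> Sup (range f)"
    by (rule Sup_upper) simp
  ultimately show ?thesis
    by auto
qed

lemma wf_greater: "wf {(y, x :: 'a). x < y}"
proof -
  have "\<not> (\<forall>i. f i < f (Suc i))" for f :: "nat \<Rightarrow> 'a"
  proof
    assume f: "\<forall>i. f i < f (Suc i)"
    then have "mono f"
      by (metis less_imp_le lift_Suc_mono_le monoI)
    then obtain N where "f (Suc N) \<le> f N"
      using ascending_chain_stabilizes by blast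
    with f show False
      by (meson leD)
  qed
  then show ?thesis
    unfolding wf_iff_no_infinite_down_chain by simp
qed

lemma exists_maximal_el_above:
  assumes "c \<noteq> (top :: 'a)"
  shows "\<exists>M. maximal_el M \<and> c \<le> M"
proof -
  obtain M where M: "c \<le> M" "M \<noteq> top" and max: "\<And>y. M < y \<Longrightarrow> \<not> (c \<le> y \<and> y \<noteq> top)"
    using wfE_min[OF wf_greater, of c "{y. c \<le> y \<and> y \<noteq> top}"] assms by auto
  have "y = M \<or> y = top" if "M \<le> y" for y
    using max[of y] M(1) that by (auto simp: order.strict_iff_order intro: order_trans)
  with M show ?thesis
    unfolding maximal_el_def by blast
qed

lemma le_if_loc_le:
  assumes "\<And>M. maximal_el M \<Longrightarrow> loc_le M u v"
  shows "u \<le> v"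
proof -
  have "colon m v u = top"
  proof (rule ccontr)
    assume "colon m v u \<noteq> top"
    then obtain M where "maximal_el M" and "colon m v u \<le> M"
      using exists_maximal_el_above by blast
    with assms show False
      by (simp add: loc_le_iff_colon)
  qed
  then show ?thesis
    using colon_mult_le[of v u] by simp
qed

lemma localization_at: "maximal_el M \<Longrightarrow> localization m M"
  by (intro localization.intro localization_axioms.intro multiplicative_lattice_axioms)

lemma principal_if_loc_principal:
  assumes "\<And>M. maximal_el M \<Longrightarrow> \<exists>p. principal m p \<and> p \<le> x \<and> loc_le M x p"
  shows "principal m x"
  unfolding principal_def meet_principal_def join_principal_def
proof (intro conjI allI antisym)
  fix y z
  show "inf y (z \<cdot> x) \<le> inf (colon m y x) z \<cdot> x"
  proof (rule le_if_loc_le)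
    fix M :: 'a
    assume "maximal_el M"
    then interpret localization m M
      by (rule localization_at)
    obtain p where "principal m p" "p \<le> x" "loc_le M x p"
      using assms \<open>maximal_el M\<close> by blast
    then show "loc_le M (inf y (z \<cdot> x)) (inf (colon m y x) z \<cdot> x)"
      by (rule loc_meet_principal)
  qed
  have "inf (colon m y x) z \<cdot> x \<le> colon m y x \<cdot> x"
    by (simp add: mult_mono_left)
  also have "\<dots> \<le> y"
    by (rule colon_mult_le)
  finally show "inf (colon m y x) z \<cdot> x \<le> inf y (z \<cdot> x)"
    by (simp add: mult_mono_left)
  show "colon m (sup (y \<cdot> x) z) x \<le> sup y (colon m z x)"
  proof (rule le_if_loc_le)
    fix M :: 'a
    assume "maximal_el M"
    then interpret localization m M
      by (rule localization_at)
    obtain p where "principal m p" "p \<le> x" "loc_le M x p"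
      using assms \<open>maximal_el M\<close> by blast
    then show "loc_le M (colon m (sup (y \<cdot> x) z) x) (sup y (colon m z x))"
      by (rule loc_join_principal)
  qed
  show "sup y (colon m z x) \<le> colon m (sup (y \<cdot> x) z) x"
  proof -
    have "sup y (colon m z x) \<cdot> x = sup (y \<cdot> x) (colon m z x \<cdot> x)"
      by (metis mult_commute mult_sup_right)
    then show ?thesis
      using colon_mult_le[of z x] by (simp add: le_colon_iff le_supI2)
  qed
qed

end

locale noetherian_localization = localization + weak_noetherian_lattice
begin

lemma loc_nakayama_finite:
  assumes "finite F" and "\<forall>p\<in>F. principal m p" and "Sup F \<preceq> sup z (M \<cdot> Sup F)"
  shows "Sup F \<preceq> z"
  using assms
proof (induction F rule: finite_induct)
  case empty
  then show ?case
    by (simp add: le_imp_loc_le)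
next
  case (insert r F)
  define w where "w = sup z (M \<cdot> Sup F)"
  have hyp: "sup r (Sup F) \<preceq> sup (M \<cdot> r) w"
    using insert.prems(2) by (simp add: w_def mult_sup_right sup_assoc sup_left_commute)
  have "principal m r"
    using insert.prems(1) by simp
  then have "r \<preceq> w"
    using le_loc_le_trans[OF sup.cobounded1 hyp] by (rule principal_loc_nakayama)
  then have "M \<cdot> r \<preceq> M \<cdot> w"
    by (rule loc_le_mult)
  also have "M \<cdot> w \<le> w"
    by (simp add: w_def mult_sup_right mult_le_right le_supI1 le_supI2)
  finally have "sup (M \<cdot> r) w \<preceq> w"
    by (intro loc_le_supI loc_le_refl)
  with hyp have y_w: "sup r (Sup F) \<preceq> w"
    by (rule loc_le_trans)
  then have "Sup F \<preceq> z"
    using insert.prems(1) le_loc_le_trans[OF sup.cobounded2 y_w]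
    by (intro insert.IH) (simp_all add: w_def)
  then have "M \<cdot> Sup F \<preceq> z"
    using loc_le_le_trans[OF loc_le_mult mult_le_right] by blast
  then have "w \<preceq> z"
    unfolding w_def by (intro loc_le_supI loc_le_refl)
  with y_w show ?case
    by (simp add: loc_le_trans)
qed

lemma loc_nakayama:
  assumes "y \<preceq> sup z (M \<cdot> y)"
  shows "y \<preceq> z"
proof -
  obtain F where F: "finite F" "\<forall>p\<in>F. principal m p" and y: "y = Sup F"
    by (rule finite_principal_decomposition)
  show ?thesis
    using loc_nakayama_finite[OF F assms[unfolded y]] unfolding y .
qed

lemma loc_le_bot_or_loc_eq_power:
  assumes r: "principal m r" "r \<le> M" "M \<preceq> r"
  shows "p \<preceq> bot \<or> (\<exists>k. p \<preceq> mult_pow r k \<and> mult_pow r k \<preceq> p)"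
proof -
  \<comment> \<open>The ascending chain c k = (p : r^k): at the first k with c k \<not>\<le> M, p is locally r^k;
     if there is none, the chain stabilises and Nakayama makes p locally 0.\<close>
  define c where "c k = colon m p (mult_pow r k)" for k
  have c_mono: "mono c"
    unfolding c_def by (intro monoI colon_mono order_refl mult_pow_antimono)
  have p_le_c: "p \<le> c k" for k
    unfolding c_def by (simp add: le_colon_iff mult_le_left)
  have colon_c: "colon m (c k) r \<le> c (Suc k)" for k
  proof -
    have "colon m (c k) r \<cdot> mult_pow r (Suc k) = colon m (c k) r \<cdot> r \<cdot> mult_pow r k"
      by (simp add: mult_assoc)
    also have "\<dots> \<le> c k \<cdot> mult_pow r k"
      by (intro mult_mono_left colon_mult_le)
    also have "\<dots> \<le> p"
      unfolding c_def by (rule colon_mult_le)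
    finally show ?thesis
      by (simp add: c_def le_colon_iff)
  qed
  have c_step: "c k \<preceq> c (Suc k) \<cdot> r" if "c k \<le> M" for k
  proof -
    have "c k \<preceq> inf (c k) r"
      using le_loc_le_trans[OF that r(3)] by (intro loc_le_infI loc_le_refl)
    also have "\<dots> = colon m (c k) r \<cdot> r"
      using r(1) by (rule principal_inf_eq)
    also have "\<dots> \<le> c (Suc k) \<cdot> r"
      using colon_c by (rule mult_mono_left)
    finally show ?thesis .
  qed
  have p_chain: "p \<preceq> mult_pow r k \<cdot> c k" if "\<forall>j<k. c j \<le> M" for k
    using that
  proof (induction k)
    case 0
    show ?case
      using p_le_c by (simp add: le_imp_loc_le)
  next
    case (Suc k)
    then have "p \<preceq> mult_pow r k \<cdot> c k"
      by simp
    also have "\<dots> \<preceq> mult_pow r k \<cdot> (c (Suc k) \<cdot> r)"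
      using Suc.prems by (intro loc_le_mult c_step) simp
    also have "\<dots> = mult_pow r (Suc k) \<cdot> c (Suc k)"
      by (simp add: mult_assoc mult_commute mult_left_commute)
    finally show ?case .
  qed
  show ?thesis
  proof (cases "\<exists>k. \<not> c k \<le> M")
    case True
    then obtain k where k: "\<not> c k \<le> M" "\<forall>j<k. c j \<le> M"
      unfolding exists_least_iff[of "\<lambda>k. \<not> c k \<le> M"] by blast
    have "p \<preceq> mult_pow r k"
      using p_chain[OF k(2)] mult_le_left by (rule loc_le_le_trans)
    moreover have "mult_pow r k \<preceq> p"
      using k(1) colon_mult_le[of p "mult_pow r k"] by (intro loc_leI[of "c k"]) (simp_all add: c_def)
    ultimately show ?thesis
      by blast
  next
    case False
    obtain N where "c (Suc N) \<le> c N"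
      using ascending_chain_stabilizes[OF c_mono] by blast
    have "c N \<preceq> c (Suc N) \<cdot> r"
      using False c_step by blast
    also have "\<dots> \<le> sup bot (M \<cdot> c N)"
      using \<open>c (Suc N) \<le> c N\<close> r(2) by (simp add: mult_commute[of _ r] mult_mono)
    finally have "c N \<preceq> bot"
      by (rule loc_nakayama)
    with p_le_c show ?thesis
      using le_loc_le_trans by blast
  qed
qed

lemma sharp_loc_principal_maximal:
  assumes "sharp m"
  obtains r where "principal m r" and "r \<le> M" and "M \<preceq> r"
proof (cases "M \<le> M \<cdot> M")
  case True
  then have "M \<preceq> sup bot (M \<cdot> M)"
    by (simp add: le_imp_loc_le)
  then have "M \<preceq> bot"
    by (rule loc_nakayama)
  then show ?thesis
    by (rule that[OF principal_bot bot_least])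
next
  case False
  obtain F where F: "finite F" "\<forall>p\<in>F. principal m p" "M = Sup F"
    by (rule finite_principal_decomposition)
  with False obtain r where r: "r \<in> F" "\<not> r \<le> M \<cdot> M"
    using Sup_least by metis
  have "r \<le> M"
    using r(1) F(3) by (simp add: Sup_upper)
  then have "sup r (M \<cdot> M) = M \<cdot> M \<or> sup r (M \<cdot> M) = M"
    by (intro sharp_above_square_maximal[OF assms maximal]) (simp_all add: mult_le_left)
  then have "sup r (M \<cdot> M) = M"
    using r(2) by (metis sup.cobounded1)
  then have "M \<preceq> sup r (M \<cdot> M)"
    by (simp add: loc_le_refl)
  then have "M \<preceq> r"
    by (rule loc_nakayama)
  with r(1) F(2) \<open>r \<le> M\<close> show ?thesis
    by (intro that) auto
qed

lemma sharp_loc_le_total: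
  assumes "sharp m"
  shows "p \<preceq> q \<or> q \<preceq> p"
proof -
  obtain r where r: "principal m r" "r \<le> M" "M \<preceq> r"
    using sharp_loc_principal_maximal[OF assms] .
  consider "p \<preceq> bot" | "q \<preceq> bot"
    | j k where "p \<preceq> mult_pow r j" "mult_pow r j \<preceq> p" "q \<preceq> mult_pow r k" "mult_pow r k \<preceq> q"
    using loc_le_bot_or_loc_eq_power[OF r, of p] loc_le_bot_or_loc_eq_power[OF r, of q] by blast
  then show ?thesis
  proof cases
    case (3 j k)
    have "mult_pow r k \<le> mult_pow r j \<or> mult_pow r j \<le> mult_pow r k"
      using mult_pow_antimono nat_le_linear by blast
    with 3 show ?thesis
      by (meson le_loc_le_trans loc_le_trans)
  qed (auto intro: loc_le_le_trans)
qed

lemma sharp_loc_le_Sup_finite: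
  assumes "sharp m" and "finite F" and "F \<noteq> {}"
  shows "\<exists>p\<in>F. Sup F \<preceq> p"
  using assms(2,3)
proof (induction F rule: finite_ne_induct)
  case (singleton p)
  then show ?case
    by (simp add: loc_le_refl)
next
  case (insert q F)
  then obtain p where p: "p \<in> F" "Sup F \<preceq> p"
    by blast
  consider "q \<preceq> p" | "p \<preceq> q"
    using sharp_loc_le_total[OF assms(1)] by blast
  then show ?case
  proof cases
    case 1
    then show ?thesis
      using p by (auto intro: loc_le_supI)
  next
    case 2
    then have "Sup F \<preceq> q"
      using p(2) by (rule loc_le_trans[rotated])
    then show ?thesis
      by (auto intro: loc_le_supI loc_le_refl)
  qed
qed

end

context weak_noetherian_lattice
begin

lemma sharp_imp_all_principal:
  assumes "sharp m"
  shows "principal m x"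
proof (rule principal_if_loc_principal)
  fix M :: 'a
  assume "maximal_el M"
  then interpret noetherian_localization m M
    by (intro noetherian_localization.intro localization_at weak_noetherian_lattice_axioms)
  obtain F where F: "finite F" "\<forall>p\<in>F. principal m p" "x = Sup F"
    by (rule finite_principal_decomposition)
  show "\<exists>p. principal m p \<and> p \<le> x \<and> loc_le M x p"
  proof (cases "F = {}")
    case True
    with F principal_bot show ?thesis
      by (auto intro: loc_le_refl)
  next
    case False
    then obtain p where "p \<in> F" and "loc_le M (Sup F) p"
      using sharp_loc_le_Sup_finite[OF assms F(1)] by blast
    with F show ?thesis
      by (auto intro: Sup_upper)
  qed
qed

end

theorem corollary2p7:
  fixes m :: "'a::complete_lattice \<Rightarrow> 'a \<Rightarrow> 'a"
  assumes "C_lattice m" and "weak_noetherian m"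
  shows "sharp m \<longleftrightarrow> (\<forall>x::'a. principal m x)"
proof -
  interpret weak_noetherian_lattice m
    using assms unfolding C_lattice_def
    by (intro weak_noetherian_lattice.intro multiplicative_lattice.intro weak_noetherian_lattice_axioms.intro) simp_all
  show ?thesis
    using sharp_imp_all_principal all_principal_imp_sharp by blast
qed

end
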